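(* Let $G$ be a graph. The following are equivalent: (a1) $M_1(G)$ is a non-trivial matroid and $G$ is a cacti-graph; (a2) for every component $A$ of $G$, the edge set $E(A)$ is an equivalence class of the relation $\sim$ of $M_1(G)$.
   Context: Graphs are finite, may have loops and parallel edges, and have no isolated vertices. A leaf is a vertex incident to exactly one edge, which is not a loop. A cacti-graph is a graph with no isolated vertices, no leaves, and no component that is a cycle. For $X\subseteq E(G)$, $G\langle X\rangle$ is the subgraph with edge set $X$ and vertex set the vertices incident to $X$. $M_1(G)$ (the bicircular matroid) is the matroid on $E(G)$ whose circuits are the inclusion-minimal members of $\{C\subseteq E(G):C\neq\emptyset,\ |C|=|V(G\langle C\rangle)|+1\}$. A matroid is non-trivial if it has at least one circuit and at least one cocircuit. For a matroid $M$ on $E$ with set of loops $L$ and set of coloops $L^*$ (elements in no circuit), the relation $\sim$ on $E\setminus(L\cup L^* )$ is defined by $a\sim b$ iff $a=b$ or $a,b$ lie in a common circuit; it is an equivalence relation. *)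

theory Defs
  imports Main
begin

text \<open>A graph is given by a finite edge set E and an incidence map ends, where
 ends e is the set of (one or two) end vertices of e; loops have one end.
 Parallel edges are allowed. The vertex set is the set of vertices incident to
 some edge, so there are no isolated vertices.\<close>

definition graph :: "'e set \<Rightarrow> ('e \<Rightarrow> 'v set) \<Rightarrow> bool" where
  "graph E ends \<longleftrightarrow> finite E \<and> (\<forall>e\<in>E. 1 \<le> card (ends e) \<and> card (ends e) \<le> 2)"

definition verts :: "('e \<Rightarrow> 'v set) \<Rightarrow> 'e set \<Rightarrow> 'v set" where
  "verts ends X = \<Union> (ends ` X)"

definition is_loop_edge :: "('e \<Rightarrow> 'v set) \<Rightarrow> 'e \<Rightarrow> bool" where
  "is_loop_edge ends e \<longleftrightarrow> card (ends e) = 1"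

definition bic_cand :: "'e set \<Rightarrow> ('e \<Rightarrow> 'v set) \<Rightarrow> 'e set \<Rightarrow> bool" where
  "bic_cand E ends C \<longleftrightarrow> C \<subseteq> E \<and> C \<noteq> {} \<and> card C = card (verts ends C) + 1"

definition bic_circuits :: "'e set \<Rightarrow> ('e \<Rightarrow> 'v set) \<Rightarrow> 'e set set" where
  "bic_circuits E ends = {C. bic_cand E ends C \<and> (\<forall>C'. C' \<subseteq> C \<and> bic_cand E ends C' \<longrightarrow> C' = C)}"

definition m_indep :: "'e set set \<Rightarrow> 'e set \<Rightarrow> bool" where
  "m_indep \<C> I \<longleftrightarrow> \<not> (\<exists>C\<in>\<C>. C \<subseteq> I)"

definition m_basis :: "'e set \<Rightarrow> 'e set set \<Rightarrow> 'e set \<Rightarrow> bool" where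
  "m_basis E \<C> B \<longleftrightarrow> B \<subseteq> E \<and> m_indep \<C> B \<and>
     (\<forall>B'. B \<subseteq> B' \<and> B' \<subseteq> E \<and> m_indep \<C> B' \<longrightarrow> B' = B)"

definition m_meets_all_bases :: "'e set \<Rightarrow> 'e set set \<Rightarrow> 'e set \<Rightarrow> bool" where
  "m_meets_all_bases E \<C> D \<longleftrightarrow> D \<subseteq> E \<and> D \<noteq> {} \<and> (\<forall>B. m_basis E \<C> B \<longrightarrow> D \<inter> B \<noteq> {})"

definition m_cocircuit :: "'e set \<Rightarrow> 'e set set \<Rightarrow> 'e set \<Rightarrow> bool" where
  "m_cocircuit E \<C> D \<longleftrightarrow> m_meets_all_bases E \<C> D \<and>
     (\<forall>D'. D' \<subseteq> D \<and> m_meets_all_bases E \<C> D' \<longrightarrow> D' = D)"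

definition m_nontrivial :: "'e set \<Rightarrow> 'e set set \<Rightarrow> bool" where
  "m_nontrivial E \<C> \<longleftrightarrow> (\<exists>C. C \<in> \<C>) \<and> (\<exists>D. m_cocircuit E \<C> D)"

definition m_loops :: "'e set \<Rightarrow> 'e set set \<Rightarrow> 'e set" where
  "m_loops E \<C> = {e\<in>E. {e} \<in> \<C>}"

definition m_coloops :: "'e set \<Rightarrow> 'e set set \<Rightarrow> 'e set" where
  "m_coloops E \<C> = {e\<in>E. \<forall>C\<in>\<C>. e \<notin> C}"

definition m_sim_dom :: "'e set \<Rightarrow> 'e set set \<Rightarrow> 'e set" where
  "m_sim_dom E \<C> = E - (m_loops E \<C> \<union> m_coloops E \<C>)"

definition m_sim :: "'e set \<Rightarrow> 'e set set \<Rightarrow> ('e \<times> 'e) set" where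
  "m_sim E \<C> = {(a, b). a \<in> m_sim_dom E \<C> \<and> b \<in> m_sim_dom E \<C> \<and>
                    (a = b \<or> (\<exists>C\<in>\<C>. a \<in> C \<and> b \<in> C))}"

definition adj :: "'e set \<Rightarrow> ('e \<Rightarrow> 'v set) \<Rightarrow> ('v \<times> 'v) set" where
  "adj E ends = {(u, v). \<exists>e\<in>E. u \<in> ends e \<and> v \<in> ends e}"

definition comp_verts :: "'e set \<Rightarrow> ('e \<Rightarrow> 'v set) \<Rightarrow> 'v set set" where
  "comp_verts E ends = verts ends E // ((adj E ends)\<^sup>*)"

definition comp_edge_sets :: "'e set \<Rightarrow> ('e \<Rightarrow> 'v set) \<Rightarrow> 'e set set" where
  "comp_edge_sets E ends = (\<lambda>K. {e\<in>E. ends e \<subseteq> K}) ` comp_verts E ends"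

definition degree :: "'e set \<Rightarrow> ('e \<Rightarrow> 'v set) \<Rightarrow> 'v \<Rightarrow> nat" where
  "degree E ends v = card {e\<in>E. v \<in> ends e \<and> \<not> is_loop_edge ends e}
                     + 2 * card {e\<in>E. v \<in> ends e \<and> is_loop_edge ends e}"

definition is_leaf :: "'e set \<Rightarrow> ('e \<Rightarrow> 'v set) \<Rightarrow> 'v \<Rightarrow> bool" where
  "is_leaf E ends v \<longleftrightarrow> (\<exists>e\<in>E. v \<in> ends e \<and> \<not> is_loop_edge ends e \<and>
                              (\<forall>e'\<in>E. v \<in> ends e' \<longrightarrow> e' = e))"

text \<open>A component is a cycle iff it (connected, by construction) is 2-regular.\<close>
definition comp_is_cycle :: "'e set \<Rightarrow> ('e \<Rightarrow> 'v set) \<Rightarrow> 'v set \<Rightarrow> bool" where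
  "comp_is_cycle E ends K \<longleftrightarrow> (\<forall>v\<in>K. degree E ends v = 2)"

definition cacti_graph :: "'e set \<Rightarrow> ('e \<Rightarrow> 'v set) \<Rightarrow> bool" where
  "cacti_graph E ends \<longleftrightarrow>
     \<not> (\<exists>v\<in>verts ends E. is_leaf E ends v) \<and>
     \<not> (\<exists>K\<in>comp_verts E ends. comp_is_cycle E ends K)"

end

theory Submission
  imports Defs
begin

text \<open>Write the excess of an edge set X as |X| - |V(X)|. The circuits of M_1(G) are the minimal
  edge sets of positive excess; as the excess is supermodular they satisfy circuit elimination, so
  lying in a common circuit is transitive. The excess is additive over components, hence no circuit
  meets two components.

  If G is a cacti-graph, a double count of degrees (all degrees are at least 2 and no component is
  2-regular) shows that deleting an edge g from a component A strictly lowers the largest excess of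
  a subset of A, and this forces a circuit through g. If two adjacent edges were in different
  classes, circuits through them would be disjoint and their union minus the two edges would still
  have positive excess; a circuit inside it lies in one class, hence inside one of the two
  circuits, which is absurd. So by connectedness E(A) is a single class.

  Conversely, if the E(A) are classes then every edge lies in a circuit. Removing a leaf edge from
  a circuit would not lower its excess, and every edge set of a cycle component has excess at most
  0, so G is a cacti-graph. Having no loops, M_1(G) has only nonempty bases, so E meets every basis
  and contains a cocircuit.\<close>

section \<open>Matroids given by their circuits\<close>

locale circuit_system =
  fixes \<C> :: "'e set set"
  assumes circuit_finite: "C \<in> \<C> \<Longrightarrow> finite C"
    and circuit_incomparable: "\<lbrakk>C1 \<in> \<C>; C2 \<in> \<C>; C1 \<subseteq> C2\<rbrakk> \<Longrightarrow> C1 = C2"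
    and circuit_elimination:
      "\<lbrakk>C1 \<in> \<C>; C2 \<in> \<C>; C1 \<noteq> C2; e \<in> C1; e \<in> C2\<rbrakk> \<Longrightarrow> \<exists>C3\<in>\<C>. C3 \<subseteq> C1 \<union> C2 - {e}"
begin

lemma circuit_not_subset_if_missing:
  "\<lbrakk>C \<in> \<C>; D \<in> \<C>; e \<in> C; e \<notin> D\<rbrakk> \<Longrightarrow> \<not> D \<subseteq> C"
  using circuit_incomparable by blast

lemma strong_circuit_elimination:
  assumes "C1 \<in> \<C>" "C2 \<in> \<C>" "e \<in> C1" "e \<in> C2" "f \<in> C1" "f \<notin> C2"
  shows "\<exists>C3\<in>\<C>. f \<in> C3 \<and> C3 \<subseteq> C1 \<union> C2 - {e}"
  using assms
proof (induction "card (C1 \<union> C2)" arbitrary: C1 C2 e f rule: less_induct)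
  case less
  have fin: "finite (C1 \<union> C2)" using less.prems(1,2) circuit_finite by blast
  obtain C3 where C3: "C3 \<in> \<C>" "C3 \<subseteq> C1 \<union> C2 - {e}"
    using circuit_elimination less.prems by blast
  show ?case
  proof (cases "f \<in> C3")
    case True
    with C3 show ?thesis by blast
  next
    case False
    obtain g where g: "g \<in> C3" "g \<in> C2" "g \<notin> C1"
      using C3 circuit_not_subset_if_missing[OF less.prems(1) C3(1) less.prems(3)] by blast
    \<comment> \<open>eliminate g from C2 and C3 keeping e, then e from C1 and the result keeping f\<close>
    have "e \<notin> C3" using C3(2) by blast
    have "card (C2 \<union> C3) < card (C1 \<union> C2)"
      using C3(2) False less.prems(5,6) by (intro psubset_card_mono[OF fin]) blast
    from less.hyps[OF this less.prems(2) C3(1) g(2) g(1) less.prems(4) \<open>e \<notin> C3\<close>]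
    obtain C4 where C4: "C4 \<in> \<C>" "e \<in> C4" "C4 \<subseteq> C2 \<union> C3 - {g}"
      by blast
    have "f \<notin> C4" using C4(3) False less.prems(6) by blast
    have "card (C1 \<union> C4) < card (C1 \<union> C2)"
      using C3(2) C4(3) g by (intro psubset_card_mono[OF fin]) blast
    from less.hyps[OF this less.prems(1) C4(1) less.prems(3) C4(2) less.prems(5) \<open>f \<notin> C4\<close>]
    obtain C5 where "C5 \<in> \<C>" "f \<in> C5" "C5 \<subseteq> C1 \<union> C4 - {e}"
      by blast
    with C3(2) C4(3) show ?thesis by blast
  qed
qed

lemma common_circuit_trans:
  assumes "C1 \<in> \<C>" "C2 \<in> \<C>" "a \<in> C1" "b \<in> C1" "b \<in> C2" "c \<in> C2"
  shows "\<exists>D\<in>\<C>. a \<in> D \<and> c \<in> D"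
  using assms
proof (induction "card (C1 \<union> C2)" arbitrary: C1 C2 b rule: less_induct)
  case less
  show ?case
  proof (cases "c \<in> C1 \<or> a \<in> C2")
    case True
    with less.prems show ?thesis by blast
  next
    case False
    have fin: "finite (C1 \<union> C2)" using less.prems(1,2) circuit_finite by blast
    obtain C3 where C3: "C3 \<in> \<C>" "a \<in> C3" "C3 \<subseteq> C1 \<union> C2 - {b}"
      using strong_circuit_elimination[of C1 C2 b a] less.prems False by blast
    obtain C4 where C4: "C4 \<in> \<C>" "c \<in> C4" "C4 \<subseteq> C2 \<union> C1 - {b}"
      using strong_circuit_elimination[of C2 C1 b c] less.prems False by blast
    obtain x where x: "x \<in> C3" "x \<in> C2" "x \<notin> C1"
      using C3 circuit_not_subset_if_missing[OF less.prems(1) C3(1) less.prems(4)] by blast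
    obtain y where y: "y \<in> C4" "y \<in> C1" "y \<notin> C2"
      using C4 circuit_not_subset_if_missing[OF less.prems(2) C4(1) less.prems(5)] by blast
    \<comment> \<open>in each case one of the pairs (C3, C2), (C1, C4), (C3, C4) has a strictly smaller union\<close>
    consider z where "z \<in> C1" "z \<notin> C2" "z \<notin> C3" | z where "z \<in> C2" "z \<notin> C1" "z \<notin> C4"
      | "C1 - C2 \<subseteq> C3" "C2 - C1 \<subseteq> C4" by blast
    then show ?thesis
    proof cases
      case 1
      have "card (C3 \<union> C2) < card (C1 \<union> C2)"
        using C3(3) 1 by (intro psubset_card_mono[OF fin]) blast
      from less.hyps[OF this C3(1) less.prems(2) C3(2) x(1) x(2) less.prems(6)]
      show ?thesis .
    next
      case 2
      have "card (C1 \<union> C4) < card (C1 \<union> C2)"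
        using C4(3) 2 by (intro psubset_card_mono[OF fin]) blast
      from less.hyps[OF this less.prems(1) C4(1) less.prems(3) y(2) y(1) C4(2)]
      show ?thesis .
    next
      case 3
      have "x \<in> C4" using 3 x by blast
      have "card (C3 \<union> C4) < card (C1 \<union> C2)"
        using C3(3) C4(3) less.prems(4,5) by (intro psubset_card_mono[OF fin]) blast
      from less.hyps[OF this C3(1) C4(1) C3(2) x(1) \<open>x \<in> C4\<close> C4(2)]
      show ?thesis .
    qed
  qed
qed

lemma m_sim_iff:
  "(a, b) \<in> m_sim E \<C> \<longleftrightarrow>
     a \<in> m_sim_dom E \<C> \<and> b \<in> m_sim_dom E \<C> \<and> (a = b \<or> (\<exists>C\<in>\<C>. a \<in> C \<and> b \<in> C))"
  by (simp add: m_sim_def)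

lemma trans_m_sim: "trans (m_sim E \<C>)"
proof (rule transI)
  fix a b c assume ab: "(a, b) \<in> m_sim E \<C>" and bc: "(b, c) \<in> m_sim E \<C>"
  have dom: "a \<in> m_sim_dom E \<C>" "c \<in> m_sim_dom E \<C>"
    using ab bc by (simp_all add: m_sim_iff)
  consider "a = b" | "b = c" | C1 C2 where "C1 \<in> \<C>" "a \<in> C1" "b \<in> C1" "C2 \<in> \<C>" "b \<in> C2" "c \<in> C2"
    using ab bc by (auto simp add: m_sim_iff)
  then show "(a, c) \<in> m_sim E \<C>"
  proof cases
    case 3
    then obtain D where "D \<in> \<C>" "a \<in> D" "c \<in> D"
      using common_circuit_trans by blast
    with dom show ?thesis by (auto simp add: m_sim_iff)
  qed (use ab bc in simp_all)
qed

lemma equiv_m_sim: "equiv (m_sim_dom E \<C>) (m_sim E \<C>)"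
proof (rule equivI)
  show "refl_on (m_sim_dom E \<C>) (m_sim E \<C>)"
    unfolding refl_on_def m_sim_def by blast
  show "sym (m_sim E \<C>)"
    unfolding sym_def m_sim_def by blast
  show "m_sim E \<C> \<subseteq> m_sim_dom E \<C> \<times> m_sim_dom E \<C>"
    unfolding m_sim_def by blast
qed (rule trans_m_sim)

end

lemma m_basis_nonempty:
  assumes "m_basis E \<C> B" "e \<in> E" "{e} \<notin> \<C>" "{} \<notin> \<C>"
  shows "B \<noteq> {}"
proof
  assume "B = {}"
  have "m_indep \<C> {e}"
    using assms(3,4) unfolding m_indep_def by (auto simp: subset_singleton_iff)
  with assms(1,2) \<open>B = {}\<close> show False
    unfolding m_basis_def by blast
qed

lemma m_cocircuit_exists:
  assumes "finite E" "E \<noteq> {}" and bases: "\<And>B. m_basis E \<C> B \<Longrightarrow> B \<noteq> {}"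
  shows "\<exists>D. m_cocircuit E \<C> D"
proof -
  have "B \<subseteq> E" if "m_basis E \<C> B" for B
    using that unfolding m_basis_def by blast
  with bases have "m_meets_all_bases E \<C> E"
    using assms(2) unfolding m_meets_all_bases_def by blast
  then obtain D where D: "m_meets_all_bases E \<C> D"
    and min: "\<And>D'. m_meets_all_bases E \<C> D' \<Longrightarrow> card D \<le> card D'"
    using ex_has_least_nat[of "m_meets_all_bases E \<C>" E card] by blast
  have "finite D"
    using D assms(1) finite_subset unfolding m_meets_all_bases_def by blast
  have "D' = D" if "D' \<subseteq> D" "m_meets_all_bases E \<C> D'" for D'
  proof (rule card_subset_eq[OF \<open>finite D\<close> that(1)])
    show "card D' = card D"
      using min[OF that(2)] card_mono[OF \<open>finite D\<close> that(1)] by linarith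
  qed
  with D show ?thesis
    unfolding m_cocircuit_def by blast
qed

section \<open>The excess function\<close>

definition excess :: "('e \<Rightarrow> 'v set) \<Rightarrow> 'e set \<Rightarrow> int" where
  "excess ends X = int (card X) - int (card (verts ends X))"

lemma verts_Un: "verts ends (X \<union> Y) = verts ends X \<union> verts ends Y"
  unfolding verts_def by blast

lemma verts_mono: "X \<subseteq> Y \<Longrightarrow> verts ends X \<subseteq> verts ends Y"
  unfolding verts_def by blast

locale multigraph =
  fixes E :: "'e set" and ends :: "'e \<Rightarrow> 'v set"
  assumes graph: "graph E ends"
begin

abbreviation circuits :: "'e set set" where
  "circuits \<equiv> bic_circuits E ends"

lemma finite_edges: "finite E"
  using graph unfolding graph_def by blast

lemma card_ends: "e \<in> E \<Longrightarrow> 1 \<le> card (ends e) \<and> card (ends e) \<le> 2"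
  using graph unfolding graph_def by blast

lemma finite_ends: "e \<in> E \<Longrightarrow> finite (ends e)"
  using card_ends card.infinite by fastforce

lemma ends_nonempty: "e \<in> E \<Longrightarrow> ends e \<noteq> {}"
  using card_ends by fastforce

lemma finite_subset_edges: "X \<subseteq> E \<Longrightarrow> finite X"
  using finite_edges finite_subset by blast

lemma finite_verts:
  assumes "X \<subseteq> E"
  shows "finite (verts ends X)"
  unfolding verts_def
proof (rule finite_UN_I)
  show "finite X" using assms by (rule finite_subset_edges)
  show "finite (ends e)" if "e \<in> X" for e
    using that assms by (intro finite_ends) blast
qed

lemma excess_Diff_singleton_ge:
  assumes "X \<subseteq> E" "x \<in> X"
  shows "excess ends X - 1 \<le> excess ends (X - {x})"
proof -
  have fin: "finite X" using assms(1) by (rule finite_subset_edges)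
  then have "card (X - {x}) = card X - 1" "card X \<ge> 1"
    using assms(2) by (auto simp: Suc_le_eq card_gt_0_iff)
  moreover have "card (verts ends (X - {x})) \<le> card (verts ends X)"
    using assms(1) by (intro card_mono finite_verts verts_mono) auto
  ultimately show ?thesis unfolding excess_def by linarith
qed

lemma excess_supermodular:
  assumes "X \<subseteq> E" "Y \<subseteq> E"
  shows "excess ends X + excess ends Y \<le> excess ends (X \<union> Y) + excess ends (X \<inter> Y)"
proof -
  have "verts ends (X \<inter> Y) \<subseteq> verts ends X \<inter> verts ends Y"
    unfolding verts_def by blast
  then have "card (verts ends (X \<inter> Y)) \<le> card (verts ends X \<inter> verts ends Y)"
    using assms finite_verts by (intro card_mono) auto
  moreover have "card X + card Y = card (X \<union> Y) + card (X \<inter> Y)"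
    using assms by (intro card_Un_Int) (auto simp: finite_subset_edges)
  moreover have "card (verts ends X) + card (verts ends Y)
      = card (verts ends (X \<union> Y)) + card (verts ends X \<inter> verts ends Y)"
    unfolding verts_Un using assms by (intro card_Un_Int) (auto simp: finite_verts)
  ultimately show ?thesis
    unfolding excess_def by linarith
qed

lemma bic_cand_iff_excess: "bic_cand E ends C \<longleftrightarrow> C \<subseteq> E \<and> C \<noteq> {} \<and> excess ends C = 1"
  unfolding bic_cand_def excess_def by linarith

lemma circuit_subset_edges: "C \<in> circuits \<Longrightarrow> C \<subseteq> E"
  and circuit_nonempty: "C \<in> circuits \<Longrightarrow> C \<noteq> {}"
  and excess_circuit: "C \<in> circuits \<Longrightarrow> excess ends C = 1"
  unfolding bic_circuits_def bic_cand_iff_excess by blast+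

lemma exists_circuit_subset:
  assumes "X \<subseteq> E" "1 \<le> excess ends X"
  shows "\<exists>C\<in>circuits. C \<subseteq> X"
  using finite_subset_edges[OF assms(1)] assms
proof (induction X rule: finite_psubset_induct)
  case (psubset X)
  show ?case
  proof (cases "\<exists>Y\<subset>X. 1 \<le> excess ends Y")
    case True
    then obtain Y where Y: "Y \<subset> X" "1 \<le> excess ends Y" by blast
    with psubset.prems(1) have "Y \<subseteq> E" by blast
    from psubset.IH[OF Y(1) this Y(2)] show ?thesis
      using Y(1) by blast
  next
    case False
    have proper: "excess ends Y \<le> 0" if "Y \<subset> X" for Y
    proof -
      from that False have "\<not> 1 \<le> excess ends Y" by blast
      then show ?thesis by linarith
    qed
    have "X \<noteq> {}"
      using psubset.prems(2) by (auto simp: excess_def)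
    then obtain x where x: "x \<in> X" by blast
    then have "excess ends X - 1 \<le> excess ends (X - {x})"
      using psubset.prems(1) by (rule excess_Diff_singleton_ge[rotated])
    moreover have "excess ends (X - {x}) \<le> 0"
      using x by (intro proper) blast
    ultimately have "excess ends X = 1"
      using psubset.prems(2) by linarith
    moreover have "C' = X" if "C' \<subseteq> X" "excess ends C' = 1" for C'
      using that proper[of C'] by (cases "C' = X") auto
    ultimately have "X \<in> circuits"
      using psubset.prems(1) x unfolding bic_circuits_def bic_cand_iff_excess by blast
    then show ?thesis by blast
  qed
qed

lemma excess_nonpos_if_psubset_circuit:
  assumes "C \<in> circuits" "Y \<subset> C"
  shows "excess ends Y \<le> 0"
proof (rule ccontr)
  assume "\<not> excess ends Y \<le> 0"
  then have "1 \<le> excess ends Y" by linarith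
  moreover have "Y \<subseteq> E"
    using assms circuit_subset_edges by blast
  ultimately obtain D where "D \<in> circuits" "D \<subseteq> Y"
    using exists_circuit_subset by blast
  then have "D = C"
    using assms unfolding bic_circuits_def by blast
  with \<open>D \<subseteq> Y\<close> assms(2) show False by blast
qed

lemma singleton_not_circuit: "{e} \<notin> circuits"
proof
  assume "{e} \<in> circuits"
  then have "e \<in> E" "excess ends {e} = 1"
    using circuit_subset_edges excess_circuit by auto
  then show False
    using card_ends[of e] by (simp add: excess_def verts_def)
qed

lemma excess_Un_disjoint_ge:
  assumes "X \<subseteq> E" "Y \<subseteq> E" "X \<inter> Y = {}" "verts ends X \<inter> verts ends Y \<noteq> {}"
  shows "excess ends X + excess ends Y + 1 \<le> excess ends (X \<union> Y)"
proof -
  have fin: "finite (verts ends X)" "finite (verts ends Y)"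
    using assms(1,2) by (auto intro: finite_verts)
  then have "1 \<le> card (verts ends X \<inter> verts ends Y)"
    using assms(4) by (simp add: Suc_le_eq card_gt_0_iff)
  moreover have "card (X \<union> Y) = card X + card Y"
    using assms(1-3) finite_subset_edges by (intro card_Un_disjoint) auto
  moreover have "card (verts ends (X \<union> Y)) + card (verts ends X \<inter> verts ends Y)
      = card (verts ends X) + card (verts ends Y)"
    unfolding verts_Un using fin by (rule card_Un_Int[symmetric])
  ultimately show ?thesis
    unfolding excess_def by linarith
qed

lemma exists_circuit_in_union_minus_adjacent:
  assumes C: "C1 \<in> circuits" "C2 \<in> circuits" "C1 \<inter> C2 = {}" "t \<in> C1" "u \<in> C2"
    and v: "v \<in> ends t" "v \<in> ends u"
  shows "\<exists>D\<in>circuits. D \<subseteq> C1 \<union> C2 - {t} - {u}"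
proof -
  have CE: "C1 \<subseteq> E" "C2 \<subseteq> E"
    using C circuit_subset_edges by blast+
  have "v \<in> verts ends C1 \<inter> verts ends C2"
    using v C unfolding verts_def by blast
  then have "excess ends C1 + excess ends C2 + 1 \<le> excess ends (C1 \<union> C2)"
    using CE C(3) by (intro excess_Un_disjoint_ge) auto
  moreover have "excess ends (C1 \<union> C2) - 1 \<le> excess ends (C1 \<union> C2 - {t})"
    using CE C(4) by (intro excess_Diff_singleton_ge) auto
  moreover have "excess ends (C1 \<union> C2 - {t}) - 1 \<le> excess ends (C1 \<union> C2 - {t} - {u})"
    using CE C(3-5) by (intro excess_Diff_singleton_ge) auto
  ultimately have "1 \<le> excess ends (C1 \<union> C2 - {t} - {u})"
    using excess_circuit[OF C(1)] excess_circuit[OF C(2)] by linarith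
  moreover have "C1 \<union> C2 - {t} - {u} \<subseteq> E"
    using CE by blast
  ultimately show ?thesis
    using exists_circuit_subset by blast
qed

text \<open>Supermodularity: D adds at least 1 to the excess of X, as X \<inter> D is a proper subset of D.\<close>
lemma excess_gap_Diff_circuit_element:
  assumes "Y \<subseteq> E" and D: "D \<in> circuits" "D \<subseteq> Y - {g}" "d \<in> D"
    and gap: "\<And>W. W \<subseteq> Y - {g} \<Longrightarrow> excess ends W < excess ends Y"
    and X: "X \<subseteq> Y - {d} - {g}"
  shows "excess ends X < excess ends (Y - {d})"
proof -
  have "X \<inter> D \<subset> D" using X D(3) by blast
  then have "excess ends (X \<inter> D) \<le> 0"
    by (rule excess_nonpos_if_psubset_circuit[OF D(1)])
  moreover have "excess ends X + excess ends D \<le> excess ends (X \<union> D) + excess ends (X \<inter> D)"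
    using X assms(1) D(1) circuit_subset_edges by (intro excess_supermodular) auto
  moreover have "excess ends (X \<union> D) < excess ends Y"
    using X D(2) by (intro gap) blast
  moreover have "excess ends Y - 1 \<le> excess ends (Y - {d})"
    using assms(1) D(2,3) by (intro excess_Diff_singleton_ge) blast+
  ultimately show ?thesis
    using excess_circuit[OF D(1)] by linarith
qed

lemma exists_circuit_through:
  assumes "Y \<subseteq> E" "g \<in> Y" "\<And>W. W \<subseteq> Y - {g} \<Longrightarrow> excess ends W < excess ends Y"
  shows "\<exists>C\<in>circuits. g \<in> C \<and> C \<subseteq> Y"
  using finite_subset_edges[OF assms(1)] assms
proof (induction Y rule: finite_psubset_induct)
  case (psubset Y)
  show ?case
  proof (cases "\<exists>W\<subseteq>Y - {g}. 1 \<le> excess ends W")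
    case True
    then obtain W where W: "W \<subseteq> Y - {g}" "1 \<le> excess ends W" by blast
    with psubset.prems(1) obtain D where D: "D \<in> circuits" "D \<subseteq> W"
      using exists_circuit_subset[of W] by blast
    then obtain d where d: "d \<in> D"
      using circuit_nonempty by blast
    have "D \<subseteq> Y - {g}"
      using D W by blast
    note gap = excess_gap_Diff_circuit_element[OF psubset.prems(1) D(1) this d psubset.prems(3)]
    have "Y - {d} \<subset> Y" "Y - {d} \<subseteq> E" "g \<in> Y - {d}"
      using psubset.prems(1,2) d D W by blast+
    from psubset.IH[OF this gap] show ?thesis by blast
  next
    case False
    have "excess ends {} < excess ends Y"
      by (rule psubset.prems(3)) blast
    then have "1 \<le> excess ends Y"
      by (simp add: excess_def verts_def)
    then obtain C where C: "C \<in> circuits" "C \<subseteq> Y"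
      using exists_circuit_subset psubset.prems(1) by blast
    have "g \<in> C"
    proof (rule ccontr)
      assume "g \<notin> C"
      with C have "C \<subseteq> Y - {g}" by blast
      moreover have "1 \<le> excess ends C"
        using excess_circuit[OF C(1)] by simp
      ultimately show False
        using False by blast
    qed
    with C show ?thesis by blast
  qed
qed

sublocale circuit_system circuits
proof
  show "finite C" if "C \<in> circuits" for C
    using that circuit_subset_edges finite_subset_edges by blast
  show "C1 = C2" if "C1 \<in> circuits" "C2 \<in> circuits" "C1 \<subseteq> C2" for C1 C2
    using that unfolding bic_circuits_def by blast
next
  fix C1 C2 e
  assume C: "C1 \<in> circuits" "C2 \<in> circuits" "C1 \<noteq> C2" "e \<in> C1" "e \<in> C2"
  have sub: "C1 \<subseteq> E" "C2 \<subseteq> E" "C1 \<union> C2 \<subseteq> E" "C1 \<union> C2 - {e} \<subseteq> E"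
    using C circuit_subset_edges by auto
  have "C1 \<inter> C2 \<subset> C1"
    using C unfolding bic_circuits_def by blast
  then have "excess ends (C1 \<inter> C2) \<le> 0"
    using C(1) by (rule excess_nonpos_if_psubset_circuit[rotated])
  then have "2 \<le> excess ends (C1 \<union> C2)"
    using excess_supermodular[OF sub(1,2)] excess_circuit[OF C(1)] excess_circuit[OF C(2)]
    by linarith
  moreover have "excess ends (C1 \<union> C2) - 1 \<le> excess ends (C1 \<union> C2 - {e})"
    using sub(3) C(4) by (intro excess_Diff_singleton_ge) auto
  ultimately have "1 \<le> excess ends (C1 \<union> C2 - {e})"
    by linarith
  with sub(4) show "\<exists>C3\<in>circuits. C3 \<subseteq> C1 \<union> C2 - {e}"
    by (rule exists_circuit_subset)
qed

end

section \<open>Components and degrees\<close>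

definition edges_in :: "'e set \<Rightarrow> ('e \<Rightarrow> 'v set) \<Rightarrow> 'v set \<Rightarrow> 'e set" where
  "edges_in E ends K = {e\<in>E. ends e \<subseteq> K}"

definition edge_mult :: "('e \<Rightarrow> 'v set) \<Rightarrow> 'e \<Rightarrow> nat" where
  "edge_mult ends e = (if is_loop_edge ends e then 2 else 1)"

context multigraph
begin

lemma comp_edge_sets_eq: "comp_edge_sets E ends = edges_in E ends ` comp_verts E ends"
  unfolding comp_edge_sets_def edges_in_def ..

lemma comp_vertsE:
  assumes "K \<in> comp_verts E ends"
  obtains x where "x \<in> verts ends E" "K = (adj E ends)\<^sup>* `` {x}"
  using assms unfolding comp_verts_def quotient_def by blast

lemma comp_verts_nonempty: "K \<in> comp_verts E ends \<Longrightarrow> K \<noteq> {}"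
  by (erule comp_vertsE) blast

lemma comp_verts_subset: "K \<in> comp_verts E ends \<Longrightarrow> K \<subseteq> verts ends E"
proof (erule comp_vertsE, safe)
  fix x y assume x: "x \<in> verts ends E" and "(x, y) \<in> (adj E ends)\<^sup>*"
  from this(2) show "y \<in> verts ends E"
    by (induction rule: rtrancl_induct) (use x in \<open>auto simp: adj_def verts_def\<close>)
qed

lemma ends_subset_comp:
  assumes "K \<in> comp_verts E ends" "e \<in> E" "ends e \<inter> K \<noteq> {}"
  shows "ends e \<subseteq> K"
proof -
  obtain x where K: "K = (adj E ends)\<^sup>* `` {x}"
    using assms(1) by (rule comp_vertsE)
  obtain w where "w \<in> ends e" "(x, w) \<in> (adj E ends)\<^sup>*"
    using assms(3) K by blast
  moreover have "(w, u) \<in> adj E ends" if "u \<in> ends e" for u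
    using that \<open>w \<in> ends e\<close> assms(2) unfolding adj_def by blast
  ultimately show ?thesis
    unfolding K by (blast intro: rtrancl_into_rtrancl)
qed

lemma comp_subset_closed:
  assumes K: "K \<in> comp_verts E ends" and "S \<subseteq> K" "s \<in> S"
    and closed: "\<And>e. e \<in> E \<Longrightarrow> ends e \<inter> S \<noteq> {} \<Longrightarrow> ends e \<subseteq> S"
  shows "K \<subseteq> S"
proof
  fix y assume "y \<in> K"
  obtain x where "K = (adj E ends)\<^sup>* `` {x}"
    using K by (rule comp_vertsE)
  with \<open>y \<in> K\<close> \<open>S \<subseteq> K\<close> \<open>s \<in> S\<close> have "(x, s) \<in> (adj E ends)\<^sup>*" "(x, y) \<in> (adj E ends)\<^sup>*"
    by blast+
  moreover have "sym ((adj E ends)\<^sup>*)"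
    by (rule sym_rtrancl) (auto simp: sym_def adj_def)
  ultimately have "(s, y) \<in> (adj E ends)\<^sup>*"
    by (meson rtrancl_trans symD)
  then show "y \<in> S"
  proof (induction rule: rtrancl_induct)
    case (step y z)
    then obtain e where "e \<in> E" "y \<in> ends e" "z \<in> ends e"
      unfolding adj_def by blast
    with closed step.IH show ?case by blast
  qed (rule \<open>s \<in> S\<close>)
qed

lemma edges_in_comp_iff:
  assumes "K \<in> comp_verts E ends"
  shows "e \<in> edges_in E ends K \<longleftrightarrow> e \<in> E \<and> ends e \<inter> K \<noteq> {}"
  using ends_subset_comp[OF assms] ends_nonempty unfolding edges_in_def by blast

lemma verts_edges_in_comp:
  assumes "K \<in> comp_verts E ends"
  shows "verts ends (edges_in E ends K) = K"
proof
  show "verts ends (edges_in E ends K) \<subseteq> K"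
    unfolding edges_in_def verts_def by blast
  show "K \<subseteq> verts ends (edges_in E ends K)"
    using comp_verts_subset[OF assms] edges_in_comp_iff[OF assms]
    unfolding verts_def by blast
qed

lemma edges_in_comp_nonempty:
  assumes K: "K \<in> comp_verts E ends"
  shows "edges_in E ends K \<noteq> {}"
proof
  assume "edges_in E ends K = {}"
  then have "K = {}"
    using verts_edges_in_comp[OF K] by (simp add: verts_def)
  with comp_verts_nonempty[OF K] show False ..
qed

lemma edge_in_some_comp:
  assumes "e \<in> E"
  obtains K where "K \<in> comp_verts E ends" "e \<in> edges_in E ends K"
proof -
  obtain v where v: "v \<in> ends e"
    using ends_nonempty[OF assms] by blast
  then have "v \<in> verts ends E"
    using assms unfolding verts_def by blast
  then have K: "(adj E ends)\<^sup>* `` {v} \<in> comp_verts E ends"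
    unfolding comp_verts_def by (rule quotientI)
  moreover have "e \<in> edges_in E ends ((adj E ends)\<^sup>* `` {v})"
    using v assms by (subst edges_in_comp_iff[OF K]) blast
  ultimately show ?thesis by (rule that)
qed

lemma excess_split_comp:
  assumes K: "K \<in> comp_verts E ends" and "C \<subseteq> E"
  shows "excess ends C = excess ends (C \<inter> edges_in E ends K) + excess ends (C - edges_in E ends K)"
proof -
  let ?X = "C \<inter> edges_in E ends K" and ?Y = "C - edges_in E ends K"
  have "verts ends ?X \<subseteq> K" "verts ends ?Y \<inter> K = {}"
    using edges_in_comp_iff[OF K] assms(2) unfolding edges_in_def verts_def by blast+
  then have "verts ends ?X \<inter> verts ends ?Y = {}" by blast
  moreover have "finite (verts ends ?X)" "finite (verts ends ?Y)"
    using assms(2) by (auto intro: finite_verts)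
  moreover have "verts ends C = verts ends ?X \<union> verts ends ?Y"
    unfolding verts_Un[symmetric] by (rule arg_cong) blast
  ultimately have "card (verts ends C) = card (verts ends ?X) + card (verts ends ?Y)"
    by (simp add: card_Un_disjoint)
  moreover have "card C = card ?X + card ?Y"
    using assms(2) finite_subset_edges by (intro card_Int_Diff) blast
  ultimately show ?thesis
    unfolding excess_def by linarith
qed

lemma circuit_subset_edges_in_comp:
  assumes K: "K \<in> comp_verts E ends" and C: "C \<in> circuits" "C \<inter> edges_in E ends K \<noteq> {}"
  shows "C \<subseteq> edges_in E ends K"
proof (rule ccontr)
  assume "\<not> C \<subseteq> edges_in E ends K"
  then have "excess ends (C \<inter> edges_in E ends K) \<le> 0" "excess ends (C - edges_in E ends K) \<le> 0"
    using C by (auto intro!: excess_nonpos_if_psubset_circuit[OF C(1)])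
  then show False
    using excess_split_comp[OF K circuit_subset_edges[OF C(1)]] excess_circuit[OF C(1)] by linarith
qed

lemma degree_eq_sum_edge_mult: "degree E ends v = (\<Sum>e | e \<in> E \<and> v \<in> ends e. edge_mult ends e)"
proof -
  let ?N = "{e\<in>E. v \<in> ends e \<and> \<not> is_loop_edge ends e}"
  let ?L = "{e\<in>E. v \<in> ends e \<and> is_loop_edge ends e}"
  have "{e. e \<in> E \<and> v \<in> ends e} = ?N \<union> ?L" by blast
  then have "(\<Sum>e | e \<in> E \<and> v \<in> ends e. edge_mult ends e)
      = (\<Sum>e\<in>?N. edge_mult ends e) + (\<Sum>e\<in>?L. edge_mult ends e)"
    using finite_edges by (simp add: sum.union_disjoint disjoint_iff)
  also have "\<dots> = card ?N + 2 * card ?L"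
    by (simp add: edge_mult_def)
  finally show ?thesis
    unfolding degree_def ..
qed

lemma sum_degree_eq:
  assumes "finite S"
  shows "(\<Sum>s\<in>S. degree E ends s) = (\<Sum>e\<in>E. edge_mult ends e * card (ends e \<inter> S))"
proof -
  have "(\<Sum>s\<in>S. degree E ends s) = (\<Sum>s\<in>S. \<Sum>e\<in>E. if s \<in> ends e then edge_mult ends e else 0)"
    unfolding degree_eq_sum_edge_mult by (rule sum.cong[OF refl], rule sum.inter_filter[OF finite_edges])
  also have "\<dots> = (\<Sum>e\<in>E. \<Sum>s\<in>S. if s \<in> ends e then edge_mult ends e else 0)"
    by (rule sum.swap)
  also have "\<dots> = (\<Sum>e\<in>E. edge_mult ends e * card (ends e \<inter> S))"
  proof (rule sum.cong[OF refl])
    fix e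
    have "{s\<in>S. s \<in> ends e} = ends e \<inter> S" by blast
    then show "(\<Sum>s\<in>S. if s \<in> ends e then edge_mult ends e else 0) = edge_mult ends e * card (ends e \<inter> S)"
      using sum.inter_filter[OF assms, of "\<lambda>_. edge_mult ends e" "\<lambda>s. s \<in> ends e"] by (simp add: mult.commute)
  qed
  finally show ?thesis .
qed

lemma edge_mult_card_Int_le:
  assumes "e \<in> E"
  shows "edge_mult ends e * card (ends e \<inter> S) \<le> 2"
    and "\<not> ends e \<subseteq> S \<Longrightarrow> edge_mult ends e * card (ends e \<inter> S) < 2"
    and "ends e \<subseteq> S \<Longrightarrow> edge_mult ends e * card (ends e \<inter> S) = 2"
proof -
  have le: "card (ends e \<inter> S) \<le> card (ends e)"
    using finite_ends[OF assms] by (intro card_mono) auto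
  then show "edge_mult ends e * card (ends e \<inter> S) \<le> 2"
    using card_ends[OF assms] by (auto simp: edge_mult_def is_loop_edge_def)
  show "edge_mult ends e * card (ends e \<inter> S) < 2" if "\<not> ends e \<subseteq> S"
  proof -
    have "card (ends e \<inter> S) < card (ends e)"
      using that finite_ends[OF assms] by (intro psubset_card_mono) auto
    then show ?thesis
      using card_ends[OF assms] by (auto simp: edge_mult_def is_loop_edge_def)
  qed
  show "edge_mult ends e * card (ends e \<inter> S) = 2" if "ends e \<subseteq> S"
    using that card_ends[OF assms] by (auto simp: edge_mult_def is_loop_edge_def Int_absorb2)
qed

lemma two_le_degree_if_not_leaf:
  assumes "v \<in> verts ends E" "\<not> is_leaf E ends v"
  shows "2 \<le> degree E ends v"
proof -
  let ?N = "{e\<in>E. v \<in> ends e \<and> \<not> is_loop_edge ends e}"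
  let ?L = "{e\<in>E. v \<in> ends e \<and> is_loop_edge ends e}"
  have fin: "finite ?N" "finite ?L" using finite_edges by auto
  show ?thesis
  proof (cases "?L = {}")
    case False
    with fin(2) have "1 \<le> card ?L"
      by (simp add: card_gt_0_iff Suc_le_eq)
    then show ?thesis
      unfolding degree_def by linarith
  next
    case True
    obtain e where "e \<in> E" "v \<in> ends e"
      using assms(1) unfolding verts_def by blast
    with True have "e \<in> ?N" by blast
    moreover have "\<not> card ?N \<le> 1"
    proof
      assume "card ?N \<le> 1"
      then have "\<forall>a\<in>?N. \<forall>b\<in>?N. a = b"
        using card_le_Suc0_iff_eq[OF fin(1)] by simp
      with \<open>e \<in> ?N\<close> True have "\<forall>e'\<in>E. v \<in> ends e' \<longrightarrow> e' = e"
        by blast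
      with \<open>e \<in> ?N\<close> have "is_leaf E ends v"
        unfolding is_leaf_def by blast
      with assms(2) show False ..
    qed
    then show ?thesis
      unfolding degree_def by linarith
  qed
qed

lemma sum_degree_eq_sum_covering_edges:
  assumes "finite S" "F \<subseteq> E" and cover: "\<And>e. e \<in> E \<Longrightarrow> ends e \<inter> S \<noteq> {} \<Longrightarrow> e \<in> F"
  shows "(\<Sum>s\<in>S. degree E ends s) = (\<Sum>e\<in>F. edge_mult ends e * card (ends e \<inter> S))"
proof -
  have "(\<Sum>s\<in>S. degree E ends s) = (\<Sum>e\<in>E. edge_mult ends e * card (ends e \<inter> S))"
    using assms(1) by (rule sum_degree_eq)
  also have "\<dots> = (\<Sum>e\<in>F. edge_mult ends e * card (ends e \<inter> S))"
  proof (rule sum.mono_neutral_right[OF finite_edges assms(2)])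
    show "\<forall>e\<in>E - F. edge_mult ends e * card (ends e \<inter> S) = 0"
      using cover by fastforce
  qed
  finally show ?thesis .
qed

lemma degree_eq_2_if_card_covering_edges_le:
  assumes fin: "finite S" "F \<subseteq> E" and deg: "\<And>s. s \<in> S \<Longrightarrow> 2 \<le> degree E ends s"
    and cover: "\<And>e. e \<in> E \<Longrightarrow> ends e \<inter> S \<noteq> {} \<Longrightarrow> e \<in> F"
    and le: "card F \<le> card S"
  shows "s \<in> S \<Longrightarrow> degree E ends s = 2" and "e \<in> F \<Longrightarrow> ends e \<subseteq> S"
proof -
  have finF: "finite F"
    using fin(2) by (rule finite_subset_edges)
  have edge: "edge_mult ends e * card (ends e \<inter> S) \<le> 2" if "e \<in> F" for e
    using that fin(2) by (intro edge_mult_card_Int_le(1)) blast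
  note sum_eq = sum_degree_eq_sum_covering_edges[OF fin cover]
  \<comment> \<open>the double count 2|S| \<le> \<dots> \<le> 2|F| \<le> 2|S| is tight everywhere\<close>
  have "(\<Sum>s\<in>S. 2) \<le> (\<Sum>s\<in>S. degree E ends s)"
    using deg by (intro sum_mono) blast
  moreover have "(\<Sum>e\<in>F. edge_mult ends e * card (ends e \<inter> S)) \<le> (\<Sum>e\<in>F. 2)"
    using edge by (intro sum_mono) blast
  moreover have "(\<Sum>s\<in>S. 2) = 2 * card S" "(\<Sum>e\<in>F. 2) = 2 * card F"
    by simp_all
  ultimately have tight: "(\<Sum>s\<in>S. 2) = (\<Sum>s\<in>S. degree E ends s)"
    "(\<Sum>e\<in>F. edge_mult ends e * card (ends e \<inter> S)) = (\<Sum>e\<in>F. 2)"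
    using le sum_eq by linarith+
  show "degree E ends s = 2" if "s \<in> S"
  proof (rule ccontr)
    assume "degree E ends s \<noteq> 2"
    with deg[OF that] have "2 < degree E ends s"
      by simp
    with that have "\<exists>s\<in>S. 2 < degree E ends s" ..
    with deg have "(\<Sum>s\<in>S. 2) < (\<Sum>s\<in>S. degree E ends s)"
      using sum_strict_mono_ex1[OF fin(1), of "\<lambda>_. 2" "degree E ends"] by blast
    with tight(1) show False by simp
  qed
  show "ends e \<subseteq> S" if "e \<in> F"
  proof (rule ccontr)
    assume "\<not> ends e \<subseteq> S"
    with that fin(2) have "\<exists>e\<in>F. edge_mult ends e * card (ends e \<inter> S) < 2"
      using edge_mult_card_Int_le(2) by blast
    with edge have "(\<Sum>e\<in>F. edge_mult ends e * card (ends e \<inter> S)) < (\<Sum>e\<in>F. 2)"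
      using sum_strict_mono_ex1[OF finF, of "\<lambda>e. edge_mult ends e * card (ends e \<inter> S)" "\<lambda>_. 2"]
      by blast
    with tight(2) show False by simp
  qed
qed

section \<open>Cacti-graphs\<close>

lemma two_le_degree_if_cacti:
  assumes "cacti_graph E ends" "v \<in> verts ends E"
  shows "2 \<le> degree E ends v"
  using assms by (intro two_le_degree_if_not_leaf) (auto simp: cacti_graph_def)

lemma card_lt_card_of_covering_edges:
  assumes cacti: "cacti_graph E ends" and K: "K \<in> comp_verts E ends"
    and "S \<subseteq> K" "F \<subseteq> E" "F \<noteq> {}"
    and cover: "\<And>e. e \<in> E \<Longrightarrow> ends e \<inter> S \<noteq> {} \<Longrightarrow> e \<in> F"
  shows "card S < card F"
proof (rule ccontr)
  assume "\<not> card S < card F"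
  then have le: "card F \<le> card S" by simp
  have S_verts: "S \<subseteq> verts ends E"
    using assms(3) comp_verts_subset[OF K] by blast
  have "finite S"
    using finite_subset[OF S_verts finite_verts] by blast
  moreover have "2 \<le> degree E ends s" if "s \<in> S" for s
    using cacti that S_verts by (intro two_le_degree_if_cacti) blast+
  ultimately have deg2: "\<And>s. s \<in> S \<Longrightarrow> degree E ends s = 2"
    and full: "\<And>e. e \<in> F \<Longrightarrow> ends e \<subseteq> S"
    using degree_eq_2_if_card_covering_edges_le[OF _ assms(4) _ cover le] by blast+
  obtain e where "e \<in> F"
    using assms(5) by blast
  then obtain s where "s \<in> S"
    using full ends_nonempty assms(4) by blast
  have "K \<subseteq> S"
  proof (rule comp_subset_closed[OF K assms(3) \<open>s \<in> S\<close>])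
    show "ends e \<subseteq> S" if "e \<in> E" "ends e \<inter> S \<noteq> {}" for e
      using that cover full by blast
  qed
  with deg2 have "comp_is_cycle E ends K"
    unfolding comp_is_cycle_def by blast
  with cacti K show False
    unfolding cacti_graph_def by blast
qed

lemma excess_lt_excess_comp_edges:
  assumes cacti: "cacti_graph E ends" and K: "K \<in> comp_verts E ends"
    and g: "g \<in> edges_in E ends K" and W: "W \<subseteq> edges_in E ends K - {g}"
  shows "excess ends W < excess ends (edges_in E ends K)"
proof -
  let ?A = "edges_in E ends K"
  have A: "?A \<subseteq> E" "verts ends ?A = K"
    using verts_edges_in_comp[OF K] unfolding edges_in_def by auto
  have WA: "W \<subseteq> ?A" "verts ends W \<subseteq> K"
    using W verts_mono[of W ?A ends] A(2) by auto
  have "card (K - verts ends W) < card (?A - W)"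
  proof (rule card_lt_card_of_covering_edges[OF cacti K])
    show "?A - W \<noteq> {}" using g W by blast
    show "e \<in> ?A - W" if "e \<in> E" "ends e \<inter> (K - verts ends W) \<noteq> {}" for e
      using that edges_in_comp_iff[OF K] unfolding verts_def by blast
  qed (use A in auto)
  moreover have "finite ?A" "finite K"
    using finite_subset_edges[OF A(1)] finite_verts[OF A(1)] unfolding A(2) by blast+
  then have "card (?A - W) = card ?A - card W" "card W \<le> card ?A"
      "card (K - verts ends W) = card K - card (verts ends W)" "card (verts ends W) \<le> card K"
    using WA by (auto intro: card_Diff_subset card_mono finite_subset)
  ultimately show ?thesis
    unfolding excess_def A(2) by linarith
qed

lemma edge_in_circuit_if_cacti:
  assumes cacti: "cacti_graph E ends" and "e \<in> E"
  shows "\<exists>C\<in>circuits. e \<in> C"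
proof -
  obtain K where K: "K \<in> comp_verts E ends" "e \<in> edges_in E ends K"
    using assms(2) by (rule edge_in_some_comp)
  have "\<exists>C\<in>circuits. e \<in> C \<and> C \<subseteq> edges_in E ends K"
  proof (rule exists_circuit_through)
    show "edges_in E ends K \<subseteq> E" unfolding edges_in_def by blast
  qed (use K excess_lt_excess_comp_edges[OF cacti K(1) K(2)] in auto)
  then show ?thesis by blast
qed

abbreviation sim_dom :: "'e set" where
  "sim_dom \<equiv> m_sim_dom E circuits"

abbreviation sim :: "('e \<times> 'e) set" where
  "sim \<equiv> m_sim E circuits"

lemma sim_dom_iff: "x \<in> sim_dom \<longleftrightarrow> x \<in> E \<and> (\<exists>C\<in>circuits. x \<in> C)"
  using singleton_not_circuit unfolding m_sim_dom_def m_loops_def m_coloops_def by blast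

lemma circuit_subset_sim_class:
  assumes "C \<in> circuits" "x \<in> C"
  shows "C \<subseteq> sim `` {x}"
proof -
  have "C \<subseteq> sim_dom"
    using assms(1) circuit_subset_edges sim_dom_iff by blast
  with assms have "(x, y) \<in> sim" if "y \<in> C" for y
    using that unfolding m_sim_iff by blast
  then show ?thesis by blast
qed

lemma adjacent_edges_sim:
  assumes t: "t \<in> sim_dom" and u: "u \<in> sim_dom" and v: "v \<in> ends t" "v \<in> ends u"
  shows "(t, u) \<in> sim"
proof (rule ccontr)
  assume "(t, u) \<notin> sim"
  then have disj: "sim `` {t} \<inter> sim `` {u} = {}"
    using equiv_class_nondisjoint[OF equiv_m_sim] by blast
  obtain C1 C2 where C: "C1 \<in> circuits" "t \<in> C1" "C2 \<in> circuits" "u \<in> C2"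
    using t u sim_dom_iff by blast
  have C_sub: "C1 \<subseteq> sim `` {t}" "C2 \<subseteq> sim `` {u}"
    using C circuit_subset_sim_class by blast+
  then have "C1 \<inter> C2 = {}"
    using disj by blast
  from exists_circuit_in_union_minus_adjacent[OF C(1,3) this C(2,4) v]
  obtain D where D: "D \<in> circuits" "D \<subseteq> C1 \<union> C2 - {t} - {u}"
    by blast
  \<comment> \<open>D lies in a single class, so it cannot meet both C1 and C2\<close>
  have D_eq: "D = C"
    if hyp: "C \<in> circuits" "C \<subseteq> sim `` {x}" "C' \<inter> sim `` {x} = {}" "D \<subseteq> C \<union> C'" "D \<inter> C \<noteq> {}"
    for C C' x
  proof -
    obtain d where d: "d \<in> D" "d \<in> C"
      using hyp(5) by blast
    then have "sim `` {x} = sim `` {d}"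
      using hyp(2) equiv_class_eq[OF equiv_m_sim] by blast
    with circuit_subset_sim_class[OF D(1) d(1)] have "D \<inter> C' = {}"
      using hyp(3) by blast
    with hyp(4) have "D \<subseteq> C" by blast
    with D(1) hyp(1) show "D = C"
      by (rule circuit_incomparable)
  qed
  have "D \<inter> C1 \<noteq> {} \<or> D \<inter> C2 \<noteq> {}"
    using D circuit_nonempty by blast
  then show False
  proof
    assume "D \<inter> C1 \<noteq> {}"
    with C(1) C_sub(1) have "D = C1"
      using D(2) C_sub(2) disj by (intro D_eq[of C1 t C2]) blast+
    with D(2) C(2) show False by blast
  next
    assume "D \<inter> C2 \<noteq> {}"
    with C(3) C_sub(2) have "D = C2"
      using D(2) C_sub(1) disj by (intro D_eq[of C2 u C1]) blast+
    with D(2) C(4) show False by blast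
  qed
qed

lemma sim_class_subset_edges_in_comp:
  assumes K: "K \<in> comp_verts E ends" and a: "a \<in> edges_in E ends K"
  shows "sim `` {a} \<subseteq> edges_in E ends K"
proof
  fix b assume "b \<in> sim `` {a}"
  then have "b = a \<or> (\<exists>C\<in>circuits. a \<in> C \<and> b \<in> C)"
    unfolding Image_singleton_iff m_sim_iff by blast
  then show "b \<in> edges_in E ends K"
    using a circuit_subset_edges_in_comp[OF K] by blast
qed

lemma adjacent_edge_in_sim_class:
  assumes dom: "E \<subseteq> sim_dom" and "e \<in> E" "t \<in> sim `` {a}" "v \<in> ends t" "v \<in> ends e"
  shows "e \<in> sim `` {a}"
proof -
  have "t \<in> sim_dom"
    using assms(3) equiv_class_eq_iff[OF equiv_m_sim] by blast
  with assms(2-5) dom have "(t, e) \<in> sim"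
    by (intro adjacent_edges_sim) blast+
  moreover have "(a, t) \<in> sim"
    using assms(3) by blast
  ultimately show ?thesis
    using trans_m_sim unfolding trans_def by blast
qed

lemma edges_in_comp_subset_sim_class:
  assumes cacti: "cacti_graph E ends" and K: "K \<in> comp_verts E ends" and a: "a \<in> edges_in E ends K"
  shows "edges_in E ends K \<subseteq> sim `` {a}"
proof -
  let ?T = "sim `` {a}"
  have dom: "E \<subseteq> sim_dom"
    using edge_in_circuit_if_cacti[OF cacti] sim_dom_iff by blast
  have grow: "e \<in> ?T" if e: "e \<in> E" "ends e \<inter> verts ends ?T \<noteq> {}" for e
    using e(2) adjacent_edge_in_sim_class[OF dom e(1)] unfolding verts_def by blast
  have "a \<in> E"
    using a unfolding edges_in_def by blast
  then have "a \<in> ?T"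
    using dom by (intro equiv_class_self[OF equiv_m_sim]) blast
  obtain s where "s \<in> ends a"
    using ends_nonempty \<open>a \<in> E\<close> by blast
  with \<open>a \<in> ?T\<close> have "s \<in> verts ends ?T"
    unfolding verts_def by blast
  have "verts ends ?T \<subseteq> K"
    using verts_mono[OF sim_class_subset_edges_in_comp[OF K a], where ends = ends]
    unfolding verts_edges_in_comp[OF K] .
  then have "K \<subseteq> verts ends ?T"
  proof (rule comp_subset_closed[OF K _ \<open>s \<in> verts ends ?T\<close>])
    show "ends e \<subseteq> verts ends ?T" if "e \<in> E" "ends e \<inter> verts ends ?T \<noteq> {}" for e
      using grow[OF that] unfolding verts_def by blast
  qed
  show ?thesis
  proof
    fix b assume "b \<in> edges_in E ends K"
    then have "b \<in> E" "ends b \<subseteq> K" "ends b \<noteq> {}"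
      using ends_nonempty unfolding edges_in_def by auto
    with \<open>K \<subseteq> verts ends ?T\<close> show "b \<in> ?T"
      by (intro grow) blast+
  qed
qed

lemma edges_in_comp_in_quotient:
  assumes cacti: "cacti_graph E ends" and K: "K \<in> comp_verts E ends"
  shows "edges_in E ends K \<in> sim_dom // sim"
proof -
  obtain a where a: "a \<in> edges_in E ends K"
    using edges_in_comp_nonempty[OF K] by blast
  then have "edges_in E ends K = sim `` {a}"
    using sim_class_subset_edges_in_comp[OF K a] edges_in_comp_subset_sim_class[OF cacti K a]
    by blast
  moreover have "a \<in> sim_dom"
    using a edge_in_circuit_if_cacti[OF cacti] sim_dom_iff unfolding edges_in_def by blast
  ultimately show ?thesis
    by (simp add: quotientI)
qed

section \<open>The converse\<close>

lemma edge_in_circuit_if_comps_in_quotient: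
  assumes classes: "\<forall>A\<in>comp_edge_sets E ends. A \<in> sim_dom // sim" and "e \<in> E"
  shows "\<exists>C\<in>circuits. e \<in> C"
proof -
  obtain K where K: "K \<in> comp_verts E ends" "e \<in> edges_in E ends K"
    using assms(2) by (rule edge_in_some_comp)
  then have "edges_in E ends K \<in> sim_dom // sim"
    using classes unfolding comp_edge_sets_eq by blast
  then have "edges_in E ends K \<subseteq> sim_dom"
    by (rule in_quotient_imp_subset[OF equiv_m_sim])
  with K(2) show ?thesis
    using sim_dom_iff by blast
qed

lemma not_leaf_if_edges_in_circuits:
  assumes circ: "\<And>e. e \<in> E \<Longrightarrow> \<exists>C\<in>circuits. e \<in> C"
  shows "\<not> is_leaf E ends v"
proof
  assume "is_leaf E ends v"
  then obtain e where e: "e \<in> E" "v \<in> ends e" and unique: "\<forall>e'\<in>E. v \<in> ends e' \<longrightarrow> e' = e"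
    unfolding is_leaf_def by blast
  obtain C where C: "C \<in> circuits" "e \<in> C"
    using circ[OF e(1)] by blast
  have CE: "C \<subseteq> E"
    by (rule circuit_subset_edges[OF C(1)])
  have "C - {e} \<subset> C"
    using C(2) by blast
  then have "excess ends (C - {e}) \<le> 0"
    by (rule excess_nonpos_if_psubset_circuit[OF C(1)])
  have "verts ends (C - {e}) \<subseteq> verts ends C - {v}" "v \<in> verts ends C"
    using unique CE C(2) e(2) unfolding verts_def by blast+
  then have "card (verts ends (C - {e})) \<le> card (verts ends C - {v})" "card (verts ends C) \<ge> 1"
    using finite_verts[OF CE] by (intro card_mono, auto simp: card_gt_0_iff Suc_le_eq)
  moreover have "card (verts ends C - {v}) = card (verts ends C) - 1"
    using \<open>v \<in> verts ends C\<close> by (rule card_Diff_singleton)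
  moreover have "card (C - {e}) = card C - 1" "card C \<ge> 1"
    using C(2) finite_subset_edges[OF CE] by (auto simp: card_gt_0_iff Suc_le_eq)
  ultimately have "excess ends C \<le> excess ends (C - {e})"
    unfolding excess_def by linarith
  with \<open>excess ends (C - {e}) \<le> 0\<close> show False
    using excess_circuit[OF C(1)] by linarith
qed

lemma card_le_card_verts_if_2_regular:
  assumes K: "K \<in> comp_verts E ends" and reg: "\<forall>v\<in>K. degree E ends v = 2"
    and X: "X \<subseteq> edges_in E ends K"
  shows "card X \<le> card (verts ends X)"
proof -
  have XE: "X \<subseteq> E"
    using X unfolding edges_in_def by blast
  have XK: "verts ends X \<subseteq> K"
    using verts_mono[OF X, where ends = ends] unfolding verts_edges_in_comp[OF K] .
  have "(\<Sum>e\<in>X. edge_mult ends e * card (ends e \<inter> verts ends X)) = (\<Sum>e\<in>X. 2)"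
  proof (rule sum.cong[OF refl])
    show "edge_mult ends e * card (ends e \<inter> verts ends X) = 2" if "e \<in> X" for e
      using that XE by (intro edge_mult_card_Int_le(3)) (auto simp: verts_def)
  qed
  then have "2 * card X = (\<Sum>e\<in>X. edge_mult ends e * card (ends e \<inter> verts ends X))"
    by simp
  also have "\<dots> \<le> (\<Sum>e\<in>E. edge_mult ends e * card (ends e \<inter> verts ends X))"
    using XE finite_edges by (intro sum_mono2) auto
  also have "\<dots> = (\<Sum>s\<in>verts ends X. degree E ends s)"
    using finite_verts[OF XE] by (rule sum_degree_eq[symmetric])
  also have "\<dots> = (\<Sum>s\<in>verts ends X. 2)"
    using reg XK by (intro sum.cong[OF refl]) blast
  also have "\<dots> = 2 * card (verts ends X)"
    by simp
  finally show ?thesis by linarith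
qed

lemma not_cycle_if_edges_in_circuits:
  assumes circ: "\<And>e. e \<in> E \<Longrightarrow> \<exists>C\<in>circuits. e \<in> C" and K: "K \<in> comp_verts E ends"
  shows "\<not> comp_is_cycle E ends K"
proof
  assume "comp_is_cycle E ends K"
  obtain g where g: "g \<in> edges_in E ends K"
    using edges_in_comp_nonempty[OF K] by blast
  then obtain C where C: "C \<in> circuits" "g \<in> C"
    using circ unfolding edges_in_def by blast
  then have "C \<subseteq> edges_in E ends K"
    using g by (intro circuit_subset_edges_in_comp[OF K]) blast+
  then have "card C \<le> card (verts ends C)"
    using \<open>comp_is_cycle E ends K\<close> K unfolding comp_is_cycle_def
    by (intro card_le_card_verts_if_2_regular) blast+
  then show False
    using excess_circuit[OF C(1)] unfolding excess_def by linarith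
qed

lemma m_nontrivial_if_edges_in_circuits:
  assumes "E \<noteq> {}" and circ: "\<And>e. e \<in> E \<Longrightarrow> \<exists>C\<in>circuits. e \<in> C"
  shows "m_nontrivial E circuits"
proof -
  obtain e where "e \<in> E"
    using assms(1) by blast
  have "{} \<notin> circuits"
    using circuit_nonempty by blast
  then have "B \<noteq> {}" if "m_basis E circuits B" for B
    using m_basis_nonempty[OF that \<open>e \<in> E\<close> singleton_not_circuit] by blast
  then show ?thesis
    using circ[OF \<open>e \<in> E\<close>] m_cocircuit_exists[OF finite_edges assms(1)]
    unfolding m_nontrivial_def by blast
qed

end

theorem mainTheorem14:
  fixes E :: "'e set" and ends :: "'e \<Rightarrow> 'v set"
  assumes "graph E ends" and "E \<noteq> {}"
  shows "(m_nontrivial E (bic_circuits E ends) \<and> cacti_graph E ends) \<longleftrightarrow>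
         (\<forall>A\<in>comp_edge_sets E ends.
            A \<in> m_sim_dom E (bic_circuits E ends) // m_sim E (bic_circuits E ends))"
proof -
  interpret multigraph E ends
    by (rule multigraph.intro) (rule assms(1))
  show ?thesis
  proof
    assume "m_nontrivial E circuits \<and> cacti_graph E ends"
    then show "\<forall>A\<in>comp_edge_sets E ends. A \<in> sim_dom // sim"
      unfolding comp_edge_sets_eq using edges_in_comp_in_quotient by blast
  next
    assume "\<forall>A\<in>comp_edge_sets E ends. A \<in> sim_dom // sim"
    then have circ: "\<exists>C\<in>circuits. e \<in> C" if "e \<in> E" for e
      using that by (rule edge_in_circuit_if_comps_in_quotient)
    have "cacti_graph E ends"
      unfolding cacti_graph_def
      using not_leaf_if_edges_in_circuits[OF circ] not_cycle_if_edges_in_circuits[OF circ] by blast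
    with m_nontrivial_if_edges_in_circuits[OF assms(2) circ]
    show "m_nontrivial E circuits \<and> cacti_graph E ends" ..
  qed
qed

end
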